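(* Let $M\ge3$ and $N\ge1$ be integers and let $f_0,f_1,f_2,f_3:\mathbb{Z}_M\to\mathbb{Z}_N$ be four distinct functions forming a totally indistinguishable set. Then for each $x\in\mathbb{Z}_M$ exactly one of the following holds: (type 1) $f_0(x)=f_1(x)=f_2(x)=f_3(x)$; (type 2) $f_0(x)=f_1(x)\neq f_2(x)=f_3(x)$; (type 3) $f_0(x)=f_2(x)\neq f_1(x)=f_3(x)$; (type 4) $f_0(x)=f_3(x)\neq f_1(x)=f_2(x)$. Let $N_i$ be the number of $x\in\mathbb{Z}_M$ of type $i$, and let $\Gamma$ be the $4\times4$ matrix with $\Gamma_{j'j}=\#\{x\in\mathbb{Z}_M: f_{j'}(x)=f_j(x)\}$. Then $\det\Gamma=16(M+N_1)N_2N_3N_4$, and the standard oracle operators $U_{f_0},U_{f_1},U_{f_2},U_{f_3}$ are unambiguously distinguishable if and only if $N_2>0$, $N_3>0$ and $N_4>0$.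
   Context: A set $\sigma$ of functions $\mathbb{Z}_M\to\mathbb{Z}_N$ is totally indistinguishable if for every $x\in\mathbb{Z}_M$ and every $f\in\sigma$ there exists $f'\in\sigma$ with $f'\neq f$ and $f'(x)=f(x)$. For $f:\mathbb{Z}_M\to\mathbb{Z}_N$ the standard oracle operator is the unitary $U_f$ on $\mathcal{H}_M\otimes\mathcal{H}_N$ (with orthonormal bases $\{|x\rangle\}_{x\in\mathbb{Z}_M}$, $\{|y\rangle\}_{y\in\mathbb{Z}_N}$) given by $U_f|x\rangle\otimes|y\rangle=|x\rangle\otimes|y\oplus f(x)\rangle$, $\oplus$ being addition mod $N$. A finite list of unitary operators $W_1,\ldots,W_K$ on a finite-dimensional Hilbert space $\mathcal{H}$ is called unambiguously distinguishable if there exist a finite-dimensional ancilla space $\mathcal{H}_A$ and a unit vector $|\psi\rangle\in\mathcal{H}\otimes\mathcal{H}_A$ such that the vectors $(W_j\otimes\mathbb{1}_A)|\psi\rangle$ are linearly independent. *)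

theory Defs
  imports Complex_Main "Jordan_Normal_Form.Determinant"
begin

text \<open>Functions Z_M to Z_N are modelled as f :: nat => nat, only their values on
  {0..<M} matter (values there lie in {0..<N}).\<close>

definition is_fun_ZM_ZN :: "nat \<Rightarrow> nat \<Rightarrow> (nat \<Rightarrow> nat) \<Rightarrow> bool" where
  "is_fun_ZM_ZN M N f \<longleftrightarrow> (\<forall>x<M. f x < N)"

definition differ_on :: "nat \<Rightarrow> (nat \<Rightarrow> nat) \<Rightarrow> (nat \<Rightarrow> nat) \<Rightarrow> bool" where
  "differ_on M f g \<longleftrightarrow> (\<exists>x<M. f x \<noteq> g x)"

definition totally_indistinguishable :: "nat \<Rightarrow> (nat \<Rightarrow> nat) set \<Rightarrow> bool" where
  "totally_indistinguishable M \<sigma> \<longleftrightarrow>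
     (\<forall>x<M. \<forall>f\<in>\<sigma>. \<exists>f'\<in>\<sigma>. differ_on M f' f \<and> f' x = f x)"

text \<open>Finite-dimensional Hilbert spaces in coordinates: H has orthonormal basis indexed by
  a finite set D; an operator is its matrix W :: 'd => 'd => complex (W d d' = <d|W|d'>);
  an ancilla H_A of dimension n has basis {0..<n}; vectors of H (x) H_A are
  functions on D \<times> {0..<n}.\<close>

definition op_tensor_id :: "'d set \<Rightarrow> ('d \<Rightarrow> 'd \<Rightarrow> complex) \<Rightarrow> ('d \<times> nat \<Rightarrow> complex) \<Rightarrow> ('d \<times> nat \<Rightarrow> complex)" where
  "op_tensor_id D W \<psi> = (\<lambda>(d, a). \<Sum>d'\<in>D. W d d' * \<psi> (d', a))"

definition lin_indep_family :: "'i set \<Rightarrow> nat \<Rightarrow> (nat \<Rightarrow> 'i \<Rightarrow> complex) \<Rightarrow> bool" where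
  "lin_indep_family S K v \<longleftrightarrow>
     (\<forall>c :: nat \<Rightarrow> complex. (\<forall>p\<in>S. (\<Sum>j<K. c j * v j p) = 0) \<longrightarrow> (\<forall>j<K. c j = 0))"

definition unambiguously_distinguishable :: "'d set \<Rightarrow> nat \<Rightarrow> (nat \<Rightarrow> 'd \<Rightarrow> 'd \<Rightarrow> complex) \<Rightarrow> bool" where
  "unambiguously_distinguishable D K W \<longleftrightarrow>
     (\<exists>n::nat. \<exists>\<psi> :: 'd \<times> nat \<Rightarrow> complex.
        (\<Sum>p\<in>D \<times> {0..<n}. (cmod (\<psi> p))\<^sup>2) = 1 \<and>
        lin_indep_family (D \<times> {0..<n}) K (\<lambda>j. op_tensor_id D (W j) \<psi>))"

text \<open>Standard oracle U_f |x>|y> = |x>|y + f x mod N> on H_M (x) H_N, basis {0..<M} \<times> {0..<N}.\<close>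
definition oracle_op :: "nat \<Rightarrow> (nat \<Rightarrow> nat) \<Rightarrow> (nat \<times> nat) \<Rightarrow> (nat \<times> nat) \<Rightarrow> complex" where
  "oracle_op N f = (\<lambda>(x, y) (x', y'). if x = x' \<and> y = (y' + f x') mod N then 1 else 0)"

definition oracle_basis :: "nat \<Rightarrow> nat \<Rightarrow> (nat \<times> nat) set" where
  "oracle_basis M N = {0..<M} \<times> {0..<N}"

definition point_type :: "(nat \<Rightarrow> nat \<Rightarrow> nat) \<Rightarrow> nat \<Rightarrow> nat \<Rightarrow> bool" where
  "point_type f i x \<longleftrightarrow>
     (i = 1 \<and> f 0 x = f 1 x \<and> f 1 x = f 2 x \<and> f 2 x = f 3 x) \<or>
     (i = 2 \<and> f 0 x = f 1 x \<and> f 1 x \<noteq> f 2 x \<and> f 2 x = f 3 x) \<or>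
     (i = 3 \<and> f 0 x = f 2 x \<and> f 2 x \<noteq> f 1 x \<and> f 1 x = f 3 x) \<or>
     (i = 4 \<and> f 0 x = f 3 x \<and> f 3 x \<noteq> f 1 x \<and> f 1 x = f 2 x)"

definition type_count :: "nat \<Rightarrow> (nat \<Rightarrow> nat \<Rightarrow> nat) \<Rightarrow> nat \<Rightarrow> nat" where
  "type_count M f i = card {x\<in>{0..<M}. point_type f i x}"

definition Gamma_mat :: "nat \<Rightarrow> (nat \<Rightarrow> nat \<Rightarrow> nat) \<Rightarrow> int mat" where
  "Gamma_mat M f = mat 4 4 (\<lambda>(j', j). int (card {x\<in>{0..<M}. f j' x = f j x}))"

end

theory Submission
  imports Defs
begin

(* At every point x the four values f j x come in groups of size at least two, because total
   indistinguishability forbids a value taken by a single f j.  So the partition of the indices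
   {0, 1, 2, 3} by value is either trivial (type 1) or one of the three pairings; identifying the
   indices with the Klein four-group under xor, a point of type t > 1 pairs j with xor j (t - 1).
   Hence Gamma (j, k) depends only on xor j k: Gamma is a group matrix of the Klein four-group,
   and its determinant is the product of the four character sums, which by
   M = N1 + N2 + N3 + N4 are 2 (M + N1), 2 N2, 2 N3 and 2 N4.

   The oracles act blockwise in x, so sum_j c_j U_(f j) = 0 as soon as, at every point, the
   coefficients of the functions sharing a value sum to zero; the ancilla state
   M^(-1/2) sum_x |x>|0>|x> shows that these are the only relations between the images.  At a
   point of type t > 1 the condition says that c sums to zero on both pairs: points of all three
   pairing types force c = 0, while if type t does not occur, the character of the Klein
   four-group that is 1 exactly on {0, t - 1} is a relation. *)

section \<open>Group determinant of the Klein four-group\<close>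

lemma det_mat_Suc:
  fixes g :: "nat \<times> nat \<Rightarrow> 'a::comm_ring_1"
  shows "det (mat (Suc n) (Suc n) g) = (\<Sum>j<Suc n. g (0, j) * (-1) ^ j *
     det (mat n n (\<lambda>(i', j'). g (Suc i', if j' < j then j' else Suc j'))))"
proof -
  have "det (mat (Suc n) (Suc n) g) =
      (\<Sum>j<Suc n. mat (Suc n) (Suc n) g $$ (0, j) * cofactor (mat (Suc n) (Suc n) g) 0 j)"
    by (rule laplace_expansion_row) auto
  also have "\<dots> = (\<Sum>j<Suc n. g (0, j) * (-1) ^ j *
      det (mat n n (\<lambda>(i', j'). g (Suc i', if j' < j then j' else Suc j'))))"
  proof (rule sum.cong[OF refl])
    fix j assume j: "j \<in> {..<Suc n}"
    have "mat_delete (mat (Suc n) (Suc n) g) 0 j =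
        mat n n (\<lambda>(i', j'). g (Suc i', if j' < j then j' else Suc j'))"
      unfolding mat_delete_def using j by (intro eq_matI) auto
    then show "mat (Suc n) (Suc n) g $$ (0, j) * cofactor (mat (Suc n) (Suc n) g) 0 j =
        g (0, j) * (-1) ^ j * det (mat n n (\<lambda>(i', j'). g (Suc i', if j' < j then j' else Suc j')))"
      unfolding cofactor_def using j by simp
  qed
  finally show ?thesis .
qed

lemma det_klein_four_group_matrix:
  fixes h :: "nat \<Rightarrow> 'a::comm_ring_1"
  shows "det (mat 4 4 (\<lambda>(i, j). h (xor i j))) =
    (h 0 + h 1 + h 2 + h 3) * (h 0 + h 1 - h 2 - h 3) * (h 0 - h 1 + h 2 - h 3) * (h 0 - h 1 - h 2 + h 3)"
proof -
  have four: "(4::nat) = Suc (Suc (Suc (Suc 0)))" by simp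
  show ?thesis
    unfolding four
    \<comment> \<open>simp evaluates xor on numerals but not on Suc-terms\<close>
    by (simp add: det_mat_Suc,
        simp only: One_nat_def[symmetric] Suc_1 numeral_2_eq_2[symmetric] numeral_3_eq_3[symmetric],
        simp, simp add: algebra_simps)
qed

lemma less_4_cases: "(i::nat) < 4 \<longleftrightarrow> i = 0 \<or> i = 1 \<or> i = 2 \<or> i = 3"
  by auto

lemma ex_less_4: "(\<exists>k<4. P k) \<longleftrightarrow> P (0::nat) \<or> P 1 \<or> P 2 \<or> P 3"
  unfolding less_4_cases by blast

lemma all_less_4: "(\<forall>k<4. P k) \<longleftrightarrow> P (0::nat) \<and> P 1 \<and> P 2 \<and> P 3"
  unfolding less_4_cases by blast

lemma sum_lessThan_4: "(\<Sum>k<4. g k) = g (0::nat) + g 1 + g 2 + g 3"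
  by (simp add: eval_nat_numeral)

lemma xor_eq_0_iff_nat: "xor (i::nat) j = 0 \<longleftrightarrow> i = j"
proof
  assume "xor i j = 0"
  have "i = xor (xor i j) j"
    by (simp add: xor.assoc)
  then show "i = j"
    using \<open>xor i j = 0\<close> by simp
qed simp

lemma four_values_pairing:
  assumes "b = a \<or> c = a \<or> d = a" and "a = b \<or> c = b \<or> d = b"
    and "a = c \<or> b = c \<or> d = c" and "a = d \<or> b = d \<or> c = d"
  shows "(a = b \<and> b = c \<and> c = d) \<or> (a = b \<and> b \<noteq> c \<and> c = d) \<or>
    (a = c \<and> c \<noteq> b \<and> b = d) \<or> (a = d \<and> d \<noteq> b \<and> b = c)"
  using assms by auto

lemma point_type_iff:
  "point_type f 1 x \<longleftrightarrow> f 0 x = f 1 x \<and> f 1 x = f 2 x \<and> f 2 x = f 3 x"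
  "point_type f 2 x \<longleftrightarrow> f 0 x = f 1 x \<and> f 1 x \<noteq> f 2 x \<and> f 2 x = f 3 x"
  "point_type f 3 x \<longleftrightarrow> f 0 x = f 2 x \<and> f 2 x \<noteq> f 1 x \<and> f 1 x = f 3 x"
  "point_type f 4 x \<longleftrightarrow> f 0 x = f 3 x \<and> f 3 x \<noteq> f 1 x \<and> f 1 x = f 2 x"
  by (simp_all add: point_type_def)

lemma point_type_unique: "point_type f s x \<Longrightarrow> point_type f t x \<Longrightarrow> s = t"
  unfolding point_type_def by auto

lemma point_type_range: "point_type f t x \<Longrightarrow> t \<in> {1..4}"
  unfolding point_type_def by auto

lemma point_type_exists:
  assumes "\<forall>j<4. \<exists>k<4. k \<noteq> j \<and> f k x = f j x"
  shows "\<exists>t\<in>{1..4}. point_type f t x"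
proof -
  have "f 1 x = f 0 x \<or> f 2 x = f 0 x \<or> f 3 x = f 0 x"
    using assms[rule_format, of 0] unfolding ex_less_4 by simp
  moreover have "f 0 x = f 1 x \<or> f 2 x = f 1 x \<or> f 3 x = f 1 x"
    using assms[rule_format, of 1] unfolding ex_less_4 by simp
  moreover have "f 0 x = f 2 x \<or> f 1 x = f 2 x \<or> f 3 x = f 2 x"
    using assms[rule_format, of 2] unfolding ex_less_4 by simp
  moreover have "f 0 x = f 3 x \<or> f 1 x = f 3 x \<or> f 2 x = f 3 x"
    using assms[rule_format, of 3] unfolding ex_less_4 by simp
  ultimately have "point_type f 1 x \<or> point_type f 2 x \<or> point_type f 3 x \<or> point_type f 4 x"
    unfolding point_type_iff by (rule four_values_pairing)
  then show ?thesis by auto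
qed

lemma card_point_types_eq_1:
  assumes "point_type f t x"
  shows "card {i\<in>{1..4}. point_type f i x} = 1"
proof -
  have "{i\<in>{1..4}. point_type f i x} = {t}"
    using assms point_type_range point_type_unique by blast
  then show ?thesis by simp
qed

lemma totally_indistinguishable_shared_value:
  fixes f :: "nat \<Rightarrow> nat \<Rightarrow> nat"
  assumes ti: "totally_indistinguishable M (f ` {0..<K})" and "j < K" and "x < M"
  shows "\<exists>k<K. k \<noteq> j \<and> f k x = f j x"
proof -
  have "f j \<in> f ` {0..<K}"
    using \<open>j < K\<close> by auto
  with ti \<open>x < M\<close> obtain k where "k < K" and "differ_on M (f k) (f j)" and "f k x = f j x"
    unfolding totally_indistinguishable_def by fastforce
  moreover have "k \<noteq> j"
    using \<open>differ_on M (f k) (f j)\<close> unfolding differ_on_def by auto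
  ultimately show ?thesis by auto
qed

lemma point_type_values_agree_iff:
  assumes "point_type f t x" and "i < 4" and "j < 4"
  shows "f i x = f j x \<longleftrightarrow> i = j \<or> t = 1 \<or> t = xor i j + 1"
proof -
  have ij: "i \<in> {0, 1, 2, 3}" "j \<in> {0, 1, 2, 3}"
    using assms(2,3) by auto
  consider "t = 1" | "t = 2" | "t = 3" | "t = 4"
    using point_type_range[OF assms(1)] by force
  then show ?thesis
  proof cases
    case 1
    have "f 1 x = f 0 x" "f 2 x = f 0 x" "f 3 x = f 0 x"
      using assms(1)[unfolded 1 point_type_iff] by simp_all
    then show ?thesis using ij(1) ij(2) 1 by (elim insertE emptyE; simp)
  next
    case 2
    have "f 1 x = f 0 x" "f 3 x = f 2 x" "f 0 x \<noteq> f 2 x" "f 2 x \<noteq> f 0 x"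
      using assms(1)[unfolded 2 point_type_iff] by auto
    then show ?thesis using ij(1) ij(2) 2 by (elim insertE emptyE; simp)
  next
    case 3
    have "f 2 x = f 0 x" "f 3 x = f 1 x" "f 0 x \<noteq> f 1 x" "f 1 x \<noteq> f 0 x"
      using assms(1)[unfolded 3 point_type_iff] by auto
    then show ?thesis using ij(1) ij(2) 3 by (elim insertE emptyE; simp)
  next
    case 4
    have "f 3 x = f 0 x" "f 2 x = f 1 x" "f 0 x \<noteq> f 1 x" "f 1 x \<noteq> f 0 x"
      using assms(1)[unfolded 4 point_type_iff] by auto
    then show ?thesis using ij(1) ij(2) 4 by (elim insertE emptyE; simp)
  qed
qed

lemma card_points_of_types:
  assumes "finite I"
  shows "card {x\<in>{0..<M}. \<exists>t\<in>I. point_type f t x} = (\<Sum>t\<in>I. type_count M f t)"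
proof -
  have "{x\<in>{0..<M}. \<exists>t\<in>I. point_type f t x} = (\<Union>t\<in>I. {x\<in>{0..<M}. point_type f t x})"
    by auto
  also have "card \<dots> = (\<Sum>t\<in>I. card {x\<in>{0..<M}. point_type f t x})"
    using assms point_type_unique by (intro card_UN_disjoint) auto
  finally show ?thesis
    unfolding type_count_def .
qed

lemma type_count_pos_iff: "type_count M f t > 0 \<longleftrightarrow> (\<exists>x<M. point_type f t x)"
  unfolding type_count_def by (auto simp: card_gt_0_iff)

section \<open>The agreement matrix\<close>

lemma card_agreement_set:
  assumes typed: "\<forall>x<M. \<exists>t\<in>{1..4}. point_type f t x" and "i < 4" and "j < 4"
  shows "card {x\<in>{0..<M}. f i x = f j x} =
    (if i = j then M else type_count M f 1 + type_count M f (xor i j + 1))"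
proof (cases "i = j")
  case False
  have "{x\<in>{0..<M}. f i x = f j x} = {x\<in>{0..<M}. \<exists>t\<in>{1, xor i j + 1}. point_type f t x}"
    using typed point_type_values_agree_iff[OF _ assms(2,3)] False by fastforce
  then show ?thesis
    using card_points_of_types[of "{1, xor i j + 1}"] False by (simp add: xor_eq_0_iff_nat)
qed simp

lemma det_Gamma_mat:
  assumes typed: "\<forall>x<M. \<exists>t\<in>{1..4}. point_type f t x"
  shows "det (Gamma_mat M f) = 16 * (int M + int (type_count M f 1)) * int (type_count M f 2)
                                 * int (type_count M f 3) * int (type_count M f 4)"
proof -
  define h where "h s = int (if s = 0 then M else type_count M f 1 + type_count M f (s + 1))" for s
  have "int (card {x\<in>{0..<M}. f i x = f j x}) = h (xor i j)" if "i < 4" and "j < 4" for i j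
    unfolding h_def using card_agreement_set[OF typed that] by (simp add: xor_eq_0_iff_nat)
  then have Gamma: "Gamma_mat M f = mat 4 4 (\<lambda>(i, j). h (xor i j))"
    unfolding Gamma_mat_def by (intro cong_mat) auto
  have "{x\<in>{0..<M}. \<exists>t\<in>{1..4}. point_type f t x} = {0..<M}"
    using typed by auto
  moreover have "{1..4::nat} = {1, 2, 3, 4}"
    by auto
  ultimately have M: "M = type_count M f 1 + type_count M f 2 + type_count M f 3 + type_count M f 4"
    using card_points_of_types[of "{1..4}" M f] by simp
  define n where "n t = int (type_count M f t)" for t
  have h: "h 0 = n 1 + n 2 + n 3 + n 4" "h 1 = n 1 + n 2" "h 2 = n 1 + n 3" "h 3 = n 1 + n 4"
    unfolding h_def n_def using arg_cong[OF M, of int] by (simp_all add: numeral_eq_Suc)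
  have "det (Gamma_mat M f) =
      (h 0 + h 1 + h 2 + h 3) * (h 0 + h 1 - h 2 - h 3) * (h 0 - h 1 + h 2 - h 3) * (h 0 - h 1 - h 2 + h 3)"
    unfolding Gamma by (rule det_klein_four_group_matrix)
  also have "\<dots> = 16 * (h 0 + n 1) * n 2 * n 3 * n 4"
    unfolding h by (simp add: algebra_simps)
  finally show ?thesis
    unfolding n_def h_def by simp
qed

section \<open>Linear relations between standard oracles\<close>

definition fibre_sums_vanish :: "nat \<Rightarrow> (nat \<Rightarrow> nat \<Rightarrow> nat) \<Rightarrow> (nat \<Rightarrow> complex) \<Rightarrow> nat \<Rightarrow> bool" where
  "fibre_sums_vanish K f c x \<longleftrightarrow> (\<forall>v. sum c {j\<in>{..<K}. f j x = v} = 0)"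

lemma fibre_sums_vanish_iff_at_values:
  "fibre_sums_vanish K f c x \<longleftrightarrow> (\<forall>j<K. sum c {k\<in>{..<K}. f k x = f j x} = 0)"
  unfolding fibre_sums_vanish_def
proof (intro iffI allI impI)
  fix v assume at_values: "\<forall>j<K. sum c {k\<in>{..<K}. f k x = f j x} = 0"
  show "sum c {j\<in>{..<K}. f j x = v} = 0"
  proof (cases "\<exists>j<K. f j x = v")
    case True
    then show ?thesis using at_values by auto
  next
    case False
    then have empty: "{j\<in>{..<K}. f j x = v} = {}" by auto
    show ?thesis by (simp only: empty sum.empty)
  qed
qed simp

lemma sum_vanishes_if_fibre_sums_vanish:
  fixes c :: "'a \<Rightarrow> 'b::comm_monoid_add"
  assumes "finite S" and "\<And>v. sum c {j\<in>S. g j = v} = 0"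
  shows "sum c {j\<in>S. P (g j)} = 0"
proof -
  have "sum c {j\<in>S. P (g j)} = (\<Sum>v\<in>g ` {j\<in>S. P (g j)}. sum c {j\<in>{j\<in>S. P (g j)}. g j = v})"
    by (rule sum.image_gen) (use assms(1) in simp)
  also have "\<dots> = (\<Sum>v\<in>g ` {j\<in>S. P (g j)}. sum c {j\<in>S. g j = v})"
    by (intro sum.cong) auto
  also have "\<dots> = 0"
    using assms(2) by simp
  finally show ?thesis .
qed

lemma oracle_op_combination:
  fixes f :: "nat \<Rightarrow> nat \<Rightarrow> nat"
  shows "(\<Sum>j<K. c j * oracle_op N (f j) (x, y) (x', y')) =
    (if x = x' then sum c {j\<in>{..<K}. y = (y' + f j x') mod N} else 0)"
proof (cases "x = x'")
  case True
  have "(\<Sum>j<K. c j * oracle_op N (f j) (x, y) (x', y')) =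
      (\<Sum>j<K. if y = (y' + f j x') mod N then c j else 0)"
    unfolding oracle_op_def using True by (intro sum.cong) auto
  also have "\<dots> = sum c {j\<in>{..<K}. y = (y' + f j x') mod N}"
    by (rule sum.inter_filter[symmetric]) simp
  finally show ?thesis
    using True by simp
qed (simp add: oracle_op_def)

lemma oracle_combination_vanishes:
  assumes "\<forall>x<M. fibre_sums_vanish K f c x" and "d \<in> oracle_basis M N"
  shows "(\<Sum>j<K. c j * oracle_op N (f j) d d') = 0"
proof -
  obtain x y x' y' where d: "d = (x, y)" and d': "d' = (x', y')"
    by (cases d, cases d')
  have "x < M"
    using assms(2) unfolding d oracle_basis_def by simp
  then have "sum c {j\<in>{..<K}. y = (y' + f j x) mod N} = 0"
    using assms(1) unfolding fibre_sums_vanish_def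
    by (intro sum_vanishes_if_fibre_sums_vanish[where g = "\<lambda>j. f j x"
          and P = "\<lambda>v. y = (y' + v) mod N"]) simp_all
  then show ?thesis
    unfolding d d' oracle_op_combination by (cases "x = x'") simp_all
qed

lemma op_tensor_id_apply: "op_tensor_id D W \<psi> (d, a) = (\<Sum>d'\<in>D. W d d' * \<psi> (d', a))"
  by (simp add: op_tensor_id_def)

lemma not_unambiguously_distinguishable_if_relation:
  assumes rel: "\<forall>d\<in>D. \<forall>d'\<in>D. (\<Sum>j<K. c j * W j d d') = 0" and "j < K" and "c j \<noteq> 0"
  shows "\<not> unambiguously_distinguishable D K W"
proof
  assume "unambiguously_distinguishable D K W"
  then obtain n and \<psi> :: "'a \<times> nat \<Rightarrow> complex" where
    indep: "lin_indep_family (D \<times> {0..<n}) K (\<lambda>j. op_tensor_id D (W j) \<psi>)"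
    unfolding unambiguously_distinguishable_def by blast
  have "(\<Sum>j<K. c j * op_tensor_id D (W j) \<psi> (d, a)) = 0" if "d \<in> D" for d a
  proof -
    have "(\<Sum>j<K. c j * op_tensor_id D (W j) \<psi> (d, a)) =
        (\<Sum>j<K. \<Sum>d'\<in>D. c j * W j d d' * \<psi> (d', a))"
      unfolding op_tensor_id_apply by (simp add: sum_distrib_left mult.assoc)
    also have "\<dots> = (\<Sum>d'\<in>D. (\<Sum>j<K. c j * W j d d') * \<psi> (d', a))"
      by (subst sum.swap) (simp add: sum_distrib_right)
    also have "\<dots> = 0"
      using rel that by simp
    finally show ?thesis .
  qed
  then have "\<forall>j<K. c j = 0"
    using indep unfolding lin_indep_family_def by blast
  with assms(2,3) show False by blast
qed

definition diagonal_state :: "nat \<Rightarrow> (nat \<times> nat) \<times> nat \<Rightarrow> complex" where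
  "diagonal_state M = (\<lambda>((x, y), a). if x = a \<and> y = 0 then complex_of_real (1 / sqrt M) else 0)"

lemma diagonal_state_apply:
  "diagonal_state M (d, a) = (if d = (a, 0) then complex_of_real (1 / sqrt M) else 0)"
  by (cases d) (simp add: diagonal_state_def)

lemma oracle_op_apply_diagonal_state:
  assumes "a < M" and "0 < N"
  shows "op_tensor_id (oracle_basis M N) (oracle_op N g) (diagonal_state M) (d, a) =
    (if d = (a, g a mod N) then complex_of_real (1 / sqrt M) else 0)"
proof -
  have "op_tensor_id (oracle_basis M N) (oracle_op N g) (diagonal_state M) (d, a) =
      (\<Sum>d'\<in>oracle_basis M N.
        if d' = (a, 0) then oracle_op N g d (a, 0) * complex_of_real (1 / sqrt M) else 0)"
    unfolding op_tensor_id_apply diagonal_state_apply by (intro sum.cong) auto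
  also have "\<dots> = oracle_op N g d (a, 0) * complex_of_real (1 / sqrt M)"
    using assms by (simp add: oracle_basis_def)
  finally show ?thesis
    by (cases d) (auto simp: oracle_op_def)
qed

lemma diagonal_state_norm:
  assumes "0 < M" and "0 < N"
  shows "(\<Sum>p\<in>oracle_basis M N \<times> {0..<M}. (cmod (diagonal_state M p))\<^sup>2) = 1"
proof -
  have amplitude: "(cmod (diagonal_state M (d, a)))\<^sup>2 = (if d = (a, 0) then 1 / real M else 0)" for d a
    using assms(1) by (simp add: diagonal_state_apply norm_divide power_divide)
  have "(\<Sum>p\<in>oracle_basis M N \<times> {0..<M}. (cmod (diagonal_state M p))\<^sup>2) =
      (\<Sum>a\<in>{0..<M}. \<Sum>d\<in>oracle_basis M N. (cmod (diagonal_state M (d, a)))\<^sup>2)"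
    by (simp add: sum.cartesian_product' sum.swap[of _ "oracle_basis M N"])
  also have "\<dots> = (\<Sum>a\<in>{0..<M}. 1 / real M)"
    unfolding amplitude using assms(2) by (intro sum.cong) (auto simp: oracle_basis_def)
  also have "\<dots> = 1"
    using assms(1) by simp
  finally show ?thesis .
qed

lemma lin_indep_oracle_images:
  fixes f :: "nat \<Rightarrow> nat \<Rightarrow> nat"
  assumes "0 < M" and "0 < N" and f_range: "\<forall>j<K. \<forall>x<M. f j x < N"
    and only_trivial: "\<And>c. \<forall>x<M. fibre_sums_vanish K f c x \<Longrightarrow> \<forall>j<K. c j = 0"
  shows "lin_indep_family (oracle_basis M N \<times> {0..<M}) K
    (\<lambda>j. op_tensor_id (oracle_basis M N) (oracle_op N (f j)) (diagonal_state M))"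
  unfolding lin_indep_family_def
proof (rule allI, rule impI)
  fix c :: "nat \<Rightarrow> complex"
  assume rel: "\<forall>p\<in>oracle_basis M N \<times> {0..<M}.
    (\<Sum>j<K. c j * op_tensor_id (oracle_basis M N) (oracle_op N (f j)) (diagonal_state M) p) = 0"
  let ?s = "complex_of_real (1 / sqrt M)"
  have "sum c {j\<in>{..<K}. f j x = v} = 0" if "x < M" for x v
  proof (cases "v < N")
    case True
    have "0 = (\<Sum>j<K. c j *
        op_tensor_id (oracle_basis M N) (oracle_op N (f j)) (diagonal_state M) ((x, v), x))"
      using rel \<open>x < M\<close> True by (simp add: oracle_basis_def)
    also have "\<dots> = (\<Sum>j<K. if f j x = v then ?s * c j else 0)"
      using f_range \<open>x < M\<close> \<open>0 < N\<close> by (intro sum.cong) (auto simp: oracle_op_apply_diagonal_state)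
    also have "\<dots> = (\<Sum>j\<in>{j\<in>{..<K}. f j x = v}. ?s * c j)"
      by (rule sum.inter_filter[symmetric]) simp
    also have "\<dots> = ?s * sum c {j\<in>{..<K}. f j x = v}"
      by (rule sum_distrib_left[symmetric])
    finally show ?thesis
      using \<open>0 < M\<close> by simp
  next
    case False
    then have "{j\<in>{..<K}. f j x = v} = {}"
      using f_range \<open>x < M\<close> by auto
    then show ?thesis
      by (simp only: sum.empty)
  qed
  then show "\<forall>j<K. c j = 0"
    using only_trivial unfolding fibre_sums_vanish_def by blast
qed

theorem unambiguously_distinguishable_oracles_iff:
  fixes f :: "nat \<Rightarrow> nat \<Rightarrow> nat"
  assumes "0 < M" and "0 < N" and f_range: "\<forall>j<K. \<forall>x<M. f j x < N"
  shows "unambiguously_distinguishable (oracle_basis M N) K (\<lambda>j. oracle_op N (f j)) \<longleftrightarrow>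
    (\<forall>c. (\<forall>x<M. fibre_sums_vanish K f c x) \<longrightarrow> (\<forall>j<K. c j = 0))"
proof (intro iffI allI impI)
  fix c j
  assume ud: "unambiguously_distinguishable (oracle_basis M N) K (\<lambda>j. oracle_op N (f j))"
    and vanish: "\<forall>x<M. fibre_sums_vanish K f c x" and "j < K"
  have "\<forall>d\<in>oracle_basis M N. \<forall>d'\<in>oracle_basis M N. (\<Sum>j<K. c j * oracle_op N (f j) d d') = 0"
    using oracle_combination_vanishes[OF vanish] by simp
  from not_unambiguously_distinguishable_if_relation[OF this \<open>j < K\<close>] ud
  show "c j = 0" by blast
next
  assume "\<forall>c. (\<forall>x<M. fibre_sums_vanish K f c x) \<longrightarrow> (\<forall>j<K. c j = 0)"
  then have "lin_indep_family (oracle_basis M N \<times> {0..<M}) K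
      (\<lambda>j. op_tensor_id (oracle_basis M N) (oracle_op N (f j)) (diagonal_state M))"
    by (intro lin_indep_oracle_images[OF assms]) simp
  then show "unambiguously_distinguishable (oracle_basis M N) K (\<lambda>j. oracle_op N (f j))"
    unfolding unambiguously_distinguishable_def using diagonal_state_norm[OF assms(1,2)]
    by (intro exI[of _ M] exI[of _ "diagonal_state M"] conjI)
qed

section \<open>Four totally indistinguishable functions\<close>

lemma fibre_sums_vanish_4_iff:
  assumes "point_type f t x"
  shows "fibre_sums_vanish 4 f c x \<longleftrightarrow>
    (\<forall>j<4. (\<Sum>k<4. if k = j \<or> t = 1 \<or> t = xor k j + 1 then c k else 0) = 0)"
proof -
  have "sum c {k\<in>{..<4}. f k x = f j x} =
      (\<Sum>k<4. if k = j \<or> t = 1 \<or> t = xor k j + 1 then c k else 0)" if "j < 4" for j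
  proof -
    have "sum c {k\<in>{..<4}. f k x = f j x} = (\<Sum>k<4. if f k x = f j x then c k else 0)"
      by (rule sum.inter_filter) simp
    also have "\<dots> = (\<Sum>k<4. if k = j \<or> t = 1 \<or> t = xor k j + 1 then c k else 0)"
      using point_type_values_agree_iff[OF assms _ that] by (intro sum.cong) auto
    finally show ?thesis .
  qed
  then show ?thesis
    unfolding fibre_sums_vanish_iff_at_values by simp
qed

lemma fibre_sums_vanish_imp_zero:
  assumes "point_type f 2 x\<^sub>2" and "point_type f 3 x\<^sub>3" and "point_type f 4 x\<^sub>4"
    and "fibre_sums_vanish 4 f c x\<^sub>2" and "fibre_sums_vanish 4 f c x\<^sub>3"
    and "fibre_sums_vanish 4 f c x\<^sub>4"
  shows "\<forall>j<4. c j = 0"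
proof -
  have "c 0 + c 1 = 0" "c 2 + c 3 = 0"
    using assms(4) unfolding fibre_sums_vanish_4_iff[OF assms(1)]
    by (simp_all add: all_less_4 sum_lessThan_4)
  moreover have "c 0 + c 2 = 0" "c 1 + c 3 = 0"
    using assms(5) unfolding fibre_sums_vanish_4_iff[OF assms(2)]
    by (simp_all add: all_less_4 sum_lessThan_4)
  moreover have "c 0 + c 3 = 0" "c 1 + c 2 = 0"
    using assms(6) unfolding fibre_sums_vanish_4_iff[OF assms(3)]
    by (simp_all add: all_less_4 sum_lessThan_4)
  moreover have "2 * c 2 = (c 0 + c 2) + (c 2 + c 3) - (c 0 + c 3)"
    by (simp add: algebra_simps)
  ultimately have "c 2 = 0" and "c 0 = - c 2" and "c 1 = - c 2" and "c 3 = - c 2"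
    by (simp_all add: eq_neg_iff_add_eq_0)
  then show ?thesis
    unfolding all_less_4 by simp
qed

lemma character_fibre_sums_vanish:
  assumes "t \<in> {2, 3, 4}" and "point_type f u x" and "u \<noteq> t"
  shows "fibre_sums_vanish 4 f (\<lambda>k. if k = 0 \<or> k = t - 1 then 1 else -1) x"
proof -
  have "u \<in> {1, 2, 3, 4}"
    using point_type_range[OF assms(2)] by auto
  then show ?thesis
    unfolding fibre_sums_vanish_4_iff[OF assms(2)] all_less_4 sum_lessThan_4
    using assms(1,3) by (elim insertE emptyE; simp)
qed

lemma only_trivial_fibre_vanishing_iff:
  assumes typed: "\<forall>x<M. \<exists>t\<in>{1..4}. point_type f t x"
  shows "(\<forall>c. (\<forall>x<M. fibre_sums_vanish 4 f c x) \<longrightarrow> (\<forall>j<4. c j = 0)) \<longleftrightarrow>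
    (\<forall>t\<in>{2, 3, 4}. \<exists>x<M. point_type f t x)"
proof
  assume only_trivial: "\<forall>c. (\<forall>x<M. fibre_sums_vanish 4 f c x) \<longrightarrow> (\<forall>j<4. c j = 0)"
  show "\<forall>t\<in>{2, 3, 4}. \<exists>x<M. point_type f t x"
  proof (rule ballI, rule ccontr)
    fix t assume t: "t \<in> {2, 3, 4}" and missing: "\<not> (\<exists>x<M. point_type f t x)"
    let ?\<chi> = "\<lambda>k. if k = 0 \<or> k = t - 1 then 1 else -1 :: complex"
    have "fibre_sums_vanish 4 f ?\<chi> x" if "x < M" for x
    proof -
      obtain u where "point_type f u x"
        using typed \<open>x < M\<close> by blast
      moreover have "u \<noteq> t"
        using calculation missing \<open>x < M\<close> by blast
      ultimately show ?thesis
        using character_fibre_sums_vanish[OF t] by blast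
    qed
    then have "\<forall>j<4. ?\<chi> j = 0"
      using only_trivial[THEN spec[where x = ?\<chi>]] by blast
    then have "?\<chi> 0 = 0"
      by (metis zero_less_numeral)
    then show False by simp
  qed
next
  assume "\<forall>t\<in>{2, 3, 4}. \<exists>x<M. point_type f t x"
  then obtain x\<^sub>2 x\<^sub>3 x\<^sub>4 where x: "point_type f 2 x\<^sub>2" "point_type f 3 x\<^sub>3" "point_type f 4 x\<^sub>4"
    and "x\<^sub>2 < M" and "x\<^sub>3 < M" and "x\<^sub>4 < M"
    by auto
  show "\<forall>c. (\<forall>x<M. fibre_sums_vanish 4 f c x) \<longrightarrow> (\<forall>j<4. c j = 0)"
  proof (rule allI, rule impI)
    fix c assume "\<forall>x<M. fibre_sums_vanish 4 f c x"
    with \<open>x\<^sub>2 < M\<close> \<open>x\<^sub>3 < M\<close> \<open>x\<^sub>4 < M\<close> show "\<forall>j<4. c j = 0"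
      by (intro fibre_sums_vanish_imp_zero[OF x]) simp_all
  qed
qed

theorem mainTheorem11:
  fixes M N :: nat and f :: "nat \<Rightarrow> nat \<Rightarrow> nat"
  assumes "M \<ge> 3" and "N \<ge> 1"
    and "\<forall>j<4. is_fun_ZM_ZN M N (f j)"
    and "\<forall>i<4. \<forall>j<4. i \<noteq> j \<longrightarrow> differ_on M (f i) (f j)"
    and "totally_indistinguishable M (f ` {0..<4})"
  shows "(\<forall>x<M. card {i\<in>{1..4}. point_type f i x} = 1)
    \<and> det (Gamma_mat M f) = 16 * (int M + int (type_count M f 1)) * int (type_count M f 2)
                                * int (type_count M f 3) * int (type_count M f 4)
    \<and> (unambiguously_distinguishable (oracle_basis M N) 4 (\<lambda>j. oracle_op N (f j))
         \<longleftrightarrow> type_count M f 2 > 0 \<and> type_count M f 3 > 0 \<and> type_count M f 4 > 0)"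
proof -
  have "\<forall>j<4. \<exists>k<4. k \<noteq> j \<and> f k x = f j x" if "x < M" for x
    using totally_indistinguishable_shared_value[OF assms(5) _ that] by blast
  then have typed: "\<forall>x<M. \<exists>t\<in>{1..4}. point_type f t x"
    using point_type_exists by blast
  have "\<forall>j<4. \<forall>x<M. f j x < N"
    using assms(3) unfolding is_fun_ZM_ZN_def by blast
  then have "unambiguously_distinguishable (oracle_basis M N) 4 (\<lambda>j. oracle_op N (f j)) \<longleftrightarrow>
      (\<forall>t\<in>{2, 3, 4}. \<exists>x<M. point_type f t x)"
    using assms(1,2) unfolding only_trivial_fibre_vanishing_iff[OF typed, symmetric]
    by (intro unambiguously_distinguishable_oracles_iff) auto
  moreover have "\<forall>x<M. card {i\<in>{1..4}. point_type f i x} = 1"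
    using typed card_point_types_eq_1 by blast
  ultimately show ?thesis
    using det_Gamma_mat[OF typed] by (simp add: type_count_pos_iff)
qed

end
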